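(* For all proof keyed labels $\theta_1$, $\theta_2$: 1. If $\theta_1$ and $\theta_2$ are independent then $\theta_1$ and $\theta_2$ are connected. 2. If $\theta_1$ and $\theta_2$ are dependent then $\theta_1$ and $\theta_2$ are connected. 3. If $\theta_1$ and $\theta_2$ are connected then either $\theta_1$ and $\theta_2$ are independent or $\theta_1$ and $\theta_2$ are dependent, but not both.
   Context: Setting: CCSK (reversible CCS with communication keys) enriched with proof labels. Labels $\alpha$ range over names $a$, co-names $\overline{a}$ and $\tau$ ($\overline{\tau}=\tau$); $\lambda$ ranges over labels other than $\tau$; $k, m, n$ range over a denumerable set of keys. Let $d$ range over directions $L, R$, with $\overline{d}$ the opposite direction, and $\upsilon, \upsilon_1, \upsilon_2$ range over strings in $\{\mid_L, \mid_R, +_L, +_R\}^*$. Proof keyed labels are $\theta ::= \upsilon\,\alpha[k] \;|\; \upsilon\,\langle \upsilon_1 \lambda[k], \upsilon_2 \overline{\lambda}[k]\rangle$; the key of $\upsilon\alpha[k]$ and of $\upsilon\langle\upsilon_1\lambda[k],\upsilon_2\overline{\lambda}[k]\rangle$ is $k$. A label of the form $\alpha[k]$ (empty string $\upsilon$) is called a prefix. In a synchronisation label $\langle\theta_L,\theta_R\rangle$, $\theta_d$ denotes the component on side $d$. Three binary relations on proof keyed labels are defined as the relations derivable by the following rules. Connectivity ($\theta_1$ and $\theta_2$ are connected): A1: $\alpha[k]$ is connected to any $\theta$. A2: $\theta$ is connected to $\alpha[k]$ if $\theta$ is not a prefix. P1: $\mid_d\theta$ connected to $\mid_d\theta'$ if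 $\theta$ connected to $\theta'$. P2: $\mid_d\theta$ connected to $\mid_{\overline d}\theta'$ (always). C1: $+_d\theta$ connected to $+_d\theta'$ if $\theta$ connected to $\theta'$. C2: $+_d\theta$ connected to $+_{\overline d}\theta'$ (always). S1: $\mid_d\theta$ connected to $\langle\theta_L,\theta_R\rangle$ if $\theta$ connected to $\theta_d$. S2: $\langle\theta_L,\theta_R\rangle$ connected to $\mid_d\theta$ if $\theta_d$ connected to $\theta$. S3: $\langle\theta_1,\theta_2\rangle$ connected to $\langle\theta'_1,\theta'_2\rangle$ if $\theta_1$ connected to $\theta'_1$ and $\theta_2$ connected to $\theta'_2$. Dependence ($\theta_1$ and $\theta_2$ are dependent): A1: $\alpha[k]$ dependent on any $\theta$. A2: $\theta$ dependent on $\alpha[k]$ if $\theta$ is not a prefix. C1: $+_d\theta$ dependent on $+_d\theta'$ if $\theta$ dependent on $\theta'$. C2: $+_d\theta$ dependent on $+_{\overline d}\theta'$ (always). P1: $\mid_d\theta$ dependent on $\mid_d\theta'$ if $\theta$ dependent on $\theta'$. P2$_k$: $\mid_d\theta$ dependent on $\mid_{\overline d}\theta'$ if the key of $\theta$ equals the key of $\theta'$. S1: $\mid_d\theta$ dependent on $\langle\theta_L,\theta_R\rangle$ if $\theta$ dependent on $\theta_d$. S2: $\langle\theta_L,\theta_R\rangle$ dependent on $\mid_d\theta$ if $\theta_d$ dependent on $\theta$. S3: $\langle\theta_1,\theta_2\rangle$ dependent on $\langle\theta'_1,\theta'_2\rangle$ if, for some $i \neq j$ in $\{1,2\}$, $\theta_i$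 is dependent on $\theta'_i$ and $\theta_j$ is connected to $\theta'_j$. Independence ($\theta_1$ and $\theta_2$ are independent): no rule for prefixes. C1: $+_d\theta$ independent of $+_d\theta'$ if $\theta$ independent of $\theta'$ (no rule for $+_d$ vs $+_{\overline d}$). P1: $\mid_d\theta$ independent of $\mid_d\theta'$ if $\theta$ independent of $\theta'$. P2$_k$: $\mid_d\theta$ independent of $\mid_{\overline d}\theta'$ if the key of $\theta$ differs from the key of $\theta'$. S1: $\mid_d\theta$ independent of $\langle\theta_L,\theta_R\rangle$ if $\theta$ independent of $\theta_d$. S2: $\langle\theta_L,\theta_R\rangle$ independent of $\mid_d\theta$ if $\theta_d$ independent of $\theta$. S3: $\langle\theta_1,\theta_2\rangle$ independent of $\langle\theta'_1,\theta'_2\rangle$ if $\theta_1$ independent of $\theta'_1$ and $\theta_2$ independent of $\theta'_2$. *)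

theory Defs
  imports Main
begin

datatype dir = L | R

fun opp :: "dir \<Rightarrow> dir" where
  "opp L = R" | "opp R = L"

datatype 'n lab = Name 'n | CoName 'n | Tau

fun co :: "'n lab \<Rightarrow> 'n lab" where
  "co (Name a) = CoName a" | "co (CoName a) = Name a" | "co Tau = Tau"

text \<open>Keys range over a denumerable set: we use nat.\<close>
type_synonym key = nat

text \<open>Raw syntax of (possibly ill-formed) proof keyed labels:
  a prefix alpha[k], |_d theta, +_d theta, and a synchronisation <theta_L, theta_R>.\<close>
datatype 'n pkl =
    Pre "'n lab" key
  | PPar dir "'n pkl"
  | PCh dir "'n pkl"
  | PSync "'n pkl" "'n pkl"

text \<open>Elements of the strings upsilon in {|_L,|_R,+_L,+_R}*.\<close>
datatype op = OPar dir | OCh dir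

fun ups :: "op list \<Rightarrow> 'n pkl \<Rightarrow> 'n pkl" where
  "ups [] t = t"
| "ups (OPar d # u) t = PPar d (ups u t)"
| "ups (OCh d # u) t = PCh d (ups u t)"

definition is_pkl :: "'n pkl \<Rightarrow> bool" where
  "is_pkl t \<longleftrightarrow>
     (\<exists>u a k. t = ups u (Pre a k)) \<or>
     (\<exists>u u1 u2 l k. l \<noteq> Tau \<and> t = ups u (PSync (ups u1 (Pre l k)) (ups u2 (Pre (co l) k))))"

fun key_of :: "'n pkl \<Rightarrow> key" where
  "key_of (Pre a k) = k"
| "key_of (PPar d t) = key_of t"
| "key_of (PCh d t) = key_of t"
| "key_of (PSync t1 t2) = key_of t1"

definition is_prefix :: "'n pkl \<Rightarrow> bool" where
  "is_prefix t \<longleftrightarrow> (\<exists>a k. t = Pre a k)"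

fun side :: "dir \<Rightarrow> 'n pkl \<Rightarrow> 'n pkl \<Rightarrow> 'n pkl" where
  "side L t1 t2 = t1" | "side R t1 t2 = t2"

inductive connected :: "'n pkl \<Rightarrow> 'n pkl \<Rightarrow> bool" where
  A1: "connected (Pre a k) t"
| A2: "\<not> is_prefix t \<Longrightarrow> connected t (Pre a k)"
| P1: "connected t t' \<Longrightarrow> connected (PPar d t) (PPar d t')"
| P2: "connected (PPar d t) (PPar (opp d) t')"
| C1: "connected t t' \<Longrightarrow> connected (PCh d t) (PCh d t')"
| C2: "connected (PCh d t) (PCh (opp d) t')"
| S1: "connected t (side d tL tR) \<Longrightarrow> connected (PPar d t) (PSync tL tR)"
| S2: "connected (side d tL tR) t \<Longrightarrow> connected (PSync tL tR) (PPar d t)"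
| S3: "connected t1 t1' \<Longrightarrow> connected t2 t2' \<Longrightarrow> connected (PSync t1 t2) (PSync t1' t2')"

inductive dependent :: "'n pkl \<Rightarrow> 'n pkl \<Rightarrow> bool" where
  A1: "dependent (Pre a k) t"
| A2: "\<not> is_prefix t \<Longrightarrow> dependent t (Pre a k)"
| C1: "dependent t t' \<Longrightarrow> dependent (PCh d t) (PCh d t')"
| C2: "dependent (PCh d t) (PCh (opp d) t')"
| P1: "dependent t t' \<Longrightarrow> dependent (PPar d t) (PPar d t')"
| P2k: "key_of t = key_of t' \<Longrightarrow> dependent (PPar d t) (PPar (opp d) t')"
| S1: "dependent t (side d tL tR) \<Longrightarrow> dependent (PPar d t) (PSync tL tR)"
| S2: "dependent (side d tL tR) t \<Longrightarrow> dependent (PSync tL tR) (PPar d t)"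
| S3a: "dependent t1 t1' \<Longrightarrow> connected t2 t2' \<Longrightarrow> dependent (PSync t1 t2) (PSync t1' t2')"
| S3b: "dependent t2 t2' \<Longrightarrow> connected t1 t1' \<Longrightarrow> dependent (PSync t1 t2) (PSync t1' t2')"

inductive independent :: "'n pkl \<Rightarrow> 'n pkl \<Rightarrow> bool" where
  C1: "independent t t' \<Longrightarrow> independent (PCh d t) (PCh d t')"
| P1: "independent t t' \<Longrightarrow> independent (PPar d t) (PPar d t')"
| P2k: "key_of t \<noteq> key_of t' \<Longrightarrow> independent (PPar d t) (PPar (opp d) t')"
| S1: "independent t (side d tL tR) \<Longrightarrow> independent (PPar d t) (PSync tL tR)"
| S2: "independent (side d tL tR) t \<Longrightarrow> independent (PSync tL tR) (PPar d t)"
| S3: "independent t1 t1' \<Longrightarrow> independent t2 t2' \<Longrightarrow> independent (PSync t1 t2) (PSync t1' t2')"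

end

theory Submission
  imports Defs
begin

text \<open>All three parts hold for arbitrary raw labels, well-formed or not, and are proved by rule
  induction. Every independence or dependence rule weakens to the connectivity rule of the same
  shape; conversely each connectivity rule is matched by an independence or a dependence rule,
  the choice for \<open>P2\<close> being made by comparing keys. Exclusivity holds because the rules are
  syntax-directed: the dependence rules applicable to the shape of an independent pair always
  require a premise (dependence of a component, or equal keys) that contradicts independence.\<close>

lemma independent_imp_connected: "independent t t' \<Longrightarrow> connected t t'"
  by (induction rule: independent.induct) (auto intro: connected.intros)

lemma dependent_imp_connected: "dependent t t' \<Longrightarrow> connected t t'"
  by (induction rule: dependent.induct) (auto intro: connected.intros)

lemma connected_imp_independent_or_dependent:
  "connected t t' \<Longrightarrow> independent t t' \<or> dependent t t'"
  by (induction rule: connected.induct) (auto intro: independent.intros dependent.intros)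

lemma opp_neq [simp]: "opp d \<noteq> d" "d \<noteq> opp d"
  by (cases d; simp)+

lemma independent_imp_not_dependent: "independent t t' \<Longrightarrow> \<not> dependent t t'"
  by (induction rule: independent.induct) (auto elim: dependent.cases)

theorem theorem4p6:
  fixes \<theta>1 \<theta>2 :: "'n pkl"
  assumes "is_pkl \<theta>1" and "is_pkl \<theta>2"
  shows "(independent \<theta>1 \<theta>2 \<longrightarrow> connected \<theta>1 \<theta>2)
       \<and> (dependent \<theta>1 \<theta>2 \<longrightarrow> connected \<theta>1 \<theta>2)
       \<and> (connected \<theta>1 \<theta>2 \<longrightarrow>
            ((independent \<theta>1 \<theta>2 \<or> dependent \<theta>1 \<theta>2) \<and> \<not> (independent \<theta>1 \<theta>2 \<and> dependent \<theta>1 \<theta>2)))"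
  using independent_imp_connected dependent_imp_connected
    connected_imp_independent_or_dependent independent_imp_not_dependent
  by blast

end
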